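(* Let $m,n\in\mathbb{N}$. Then $K_{m,n}\subseteq \mathrm{Cl}(H_{m,n})$.
   Context: Thompson's group $F$ is the group of piecewise linear homeomorphisms of $[0,1]$ with finitely many dyadic breakpoints and slopes integer powers of $2$; composition is from left to right. Writing numbers in $(0,1)$ as $.s$ with $s$ an infinite binary word, $x_0$ maps $.00\alpha\mapsto .0\alpha$, $.01\alpha\mapsto .10\alpha$, $.1\alpha\mapsto .11\alpha$, and $x_1$ maps $.0\alpha\mapsto .0\alpha$, $.100\alpha\mapsto .10\alpha$, $.101\alpha\mapsto .110\alpha$, $.11\alpha\mapsto .111\alpha$. Let $x=x_0$, $y=x_0^2x_1$, and $H_{m,n}=\langle x^m,y^n\rangle$. An element $h\in F$ has the pair of branches $u\rightarrow v$ (for finite binary words $u,v$) if $h(.u\alpha)=.v\alpha$ for every infinite binary word $\alpha$. For $H\le F$ write $u\sim_H v$ if some $h\in H$ has the pair of branches $u\rightarrow v$. The closure $\mathrm{Cl}(H)$ is the subgroup of all $f\in F$ for which there is a finite subdivision of $[0,1]$ into intervals on each of which $f$ coincides with some element of $H$; $H$ is closed if $H=\mathrm{Cl}(H)$ (intersections of closed subgroups are closed). Let $d=\gcd(m,n)$. $K_{m,n}$ is the minimal closed subgroup $K$ of $F$ such that: (a) $0^k1\sim_K 0^{k+d}1$ for all $k\in\mathbb{N}$; (b) $1^k0\sim_K 1^{k+d}0$ for all $k\in\mathbb{N}$; (c) $0^k1\sim_K 1^{d+1-k}0$ for $1\le k\le d$; (d) $0^{2k}10\sim_K 1^{1+3(n-k)}0$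 for $1\le k\le n$; (e) $0^{2k}11\sim_K 1^{2+3(n-k)}0$ for $1\le k\le n$; (f) $0^{2k-1}1\sim_K 1^{3(n-k+1)}0$ for $1\le k\le n$. *)

theory Defs
  imports Complex_Main
begin

text \<open>Finite binary words are bool lists (True = 1, False = 0); infinite binary
words are functions nat => bool.  The number .s is the binary value of s.\<close>

definition bval :: "(nat \<Rightarrow> bool) \<Rightarrow> real" where
  "bval s = (\<Sum>i. (if s i then 1 else 0) / 2 ^ Suc i)"

definition wconc :: "bool list \<Rightarrow> (nat \<Rightarrow> bool) \<Rightarrow> (nat \<Rightarrow> bool)" where
  "wconc u \<alpha> = (\<lambda>i. if i < length u then u ! i else \<alpha> (i - length u))"

definition has_branch :: "(real \<Rightarrow> real) \<Rightarrow> bool list \<Rightarrow> bool list \<Rightarrow> bool" where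
  "has_branch h u v \<longleftrightarrow> (\<forall>\<alpha>. h (bval (wconc u \<alpha>)) = bval (wconc v \<alpha>))"

definition dyadic :: "real \<Rightarrow> bool" where
  "dyadic x \<longleftrightarrow> (\<exists>(a::int) (k::nat). x = a / 2 ^ k)"

text \<open>Elements of F are represented as functions on the reals that are the identity
outside [0,1]; on [0,1] they are piecewise linear with finitely many dyadic
breakpoints and slopes integer powers of 2, fixing 0 and 1 (continuity is built in,
since the affine pieces are required on closed intervals, so they agree at breakpoints;
with positive slopes this makes f an increasing homeomorphism of [0,1]).\<close>
definition thompsonF :: "(real \<Rightarrow> real) set" where
  "thompsonF = {f. (\<forall>t. t \<notin> {0..1} \<longrightarrow> f t = t) \<and> f 0 = 0 \<and> f 1 = 1 \<and>
     (\<exists>(a::nat \<Rightarrow> real) (k::nat) (e::nat \<Rightarrow> int) (b::nat \<Rightarrow> real).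
        a 0 = 0 \<and> a k = 1 \<and> (\<forall>i<k. a i < a (Suc i)) \<and> (\<forall>i\<le>k. dyadic (a i)) \<and>
        (\<forall>i<k. \<forall>t\<in>{a i..a (Suc i)}. f t = 2 powi e i * t + b i))}"

text \<open>Composition in F is from left to right: the product f g is g \<circ> f.
Subgroups (a notion independent of the order convention):\<close>
definition is_subgroupF :: "(real \<Rightarrow> real) set \<Rightarrow> bool" where
  "is_subgroupF S \<longleftrightarrow> S \<subseteq> thompsonF \<and> id \<in> S \<and>
     (\<forall>f\<in>S. \<forall>g\<in>S. g \<circ> f \<in> S) \<and> (\<forall>f\<in>S. inv f \<in> S)"

definition genF :: "(real \<Rightarrow> real) set \<Rightarrow> (real \<Rightarrow> real) set" where
  "genF A = \<Inter>{S. is_subgroupF S \<and> A \<subseteq> S}"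

text \<open>Generators x0, x1 written out from their binary descriptions:
x0: .00a -> .0a on [0,1/4]; .01a -> .10a on [1/4,1/2]; .1a -> .11a on [1/2,1].
x1: identity on [0,1/2]; .100a -> .10a on [1/2,5/8]; .101a -> .110a on [5/8,3/4];
.11a -> .111a on [3/4,1].\<close>
definition x0 :: "real \<Rightarrow> real" where
  "x0 t = (if t < 0 \<or> t > 1 then t
           else if t \<le> 1/4 then 2 * t
           else if t \<le> 1/2 then t + 1/4
           else t / 2 + 1/2)"

definition x1 :: "real \<Rightarrow> real" where
  "x1 t = (if t < 0 \<or> t > 1 then t
           else if t \<le> 1/2 then t
           else if t \<le> 5/8 then 2 * t - 1/2
           else if t \<le> 3/4 then t + 1/8
           else t / 2 + 1/2)"

definition xF :: "real \<Rightarrow> real" where "xF = x0"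

text \<open>y = x0^2 x1 with left-to-right composition: first x0 twice, then x1.\<close>
definition yF :: "real \<Rightarrow> real" where "yF = x1 \<circ> x0 \<circ> x0"

definition Hmn :: "nat \<Rightarrow> nat \<Rightarrow> (real \<Rightarrow> real) set" where
  "Hmn m n = genF {xF ^^ m, yF ^^ n}"

definition simH :: "(real \<Rightarrow> real) set \<Rightarrow> bool list \<Rightarrow> bool list \<Rightarrow> bool" where
  "simH H u v \<longleftrightarrow> (\<exists>h\<in>H. has_branch h u v)"

definition ClF :: "(real \<Rightarrow> real) set \<Rightarrow> (real \<Rightarrow> real) set" where
  "ClF H = {f \<in> thompsonF. \<exists>(a::nat \<Rightarrow> real) (k::nat).
      a 0 = 0 \<and> a k = 1 \<and> (\<forall>i<k. a i < a (Suc i)) \<and>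
      (\<forall>i<k. \<exists>h\<in>H. \<forall>t\<in>{a i..a (Suc i)}. f t = h t)}"

definition closedF :: "(real \<Rightarrow> real) set \<Rightarrow> bool" where
  "closedF H \<longleftrightarrow> ClF H = H"

abbreviation zw :: "nat \<Rightarrow> bool list" where "zw k \<equiv> replicate k False"
abbreviation ow :: "nat \<Rightarrow> bool list" where "ow k \<equiv> replicate k True"

definition Kconds :: "nat \<Rightarrow> nat \<Rightarrow> (real \<Rightarrow> real) set \<Rightarrow> bool" where
  "Kconds m n K \<longleftrightarrow> (let d = gcd m n in
     (\<forall>k\<ge>1. simH K (zw k @ [True]) (zw (k + d) @ [True])) \<and>
     (\<forall>k\<ge>1. simH K (ow k @ [False]) (ow (k + d) @ [False])) \<and>
     (\<forall>k. 1 \<le> k \<and> k \<le> d \<longrightarrow> simH K (zw k @ [True]) (ow (d + 1 - k) @ [False])) \<and>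
     (\<forall>k. 1 \<le> k \<and> k \<le> n \<longrightarrow> simH K (zw (2*k) @ [True, False]) (ow (1 + 3*(n-k)) @ [False])) \<and>
     (\<forall>k. 1 \<le> k \<and> k \<le> n \<longrightarrow> simH K (zw (2*k) @ [True, True]) (ow (2 + 3*(n-k)) @ [False])) \<and>
     (\<forall>k. 1 \<le> k \<and> k \<le> n \<longrightarrow> simH K (zw (2*k - 1) @ [True]) (ow (3*(n-k+1)) @ [False])))"

definition Kmn :: "nat \<Rightarrow> nat \<Rightarrow> (real \<Rightarrow> real) set" where
  "Kmn m n = \<Inter>{K. is_subgroupF K \<and> closedF K \<and> Kconds m n K}"

end

theory Submission
  imports Defs
begin

text \<open>\<open>Kmn m n\<close> is the least closed subgroup satisfying (a)--(f), so it suffices to show that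
\<open>Cl(H\<^sub>m\<^sub>,\<^sub>n)\<close> is a closed subgroup satisfying (a)--(f). Closure of \<open>Cl(H)\<close> under products,
inverses and \<open>Cl\<close> itself comes from common refinements of the finitely many breakpoints, which
stay dyadic because elements of \<open>F\<close> preserve dyadic rationals. For (a)--(c), the cones
\<open>0\<^sup>k1\<close> and \<open>1\<^sup>k0\<close> form a line on which \<open>x\<close> translates by \<open>1\<close> and \<open>y\<close> translates by
\<open>3\<close> or \<open>2\<close> on the two sides, so \<open>x\<^sup>m\<close> and \<open>y\<^sup>n\<close> identify cones at distance \<open>m\<close> and \<open>n\<close>,
hence at distance \<open>gcd m n\<close>; (d)--(f) are branches of \<open>y\<^sup>n\<close>.\<close>

section \<open>Piecewise properties of the unit interval\<close>

text \<open>Sets of breakpoints, rather than the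
increasing sequences in the definitions of \<open>thompsonF\<close> and \<open>ClF\<close>, turn common refinements
into unions.\<close>

definition piecewise :: "(real \<Rightarrow> real \<Rightarrow> bool) \<Rightarrow> real set \<Rightarrow> bool" where
  "piecewise P S \<longleftrightarrow> finite S \<and> S \<subseteq> {0..1} \<and> 0 \<in> S \<and> 1 \<in> S \<and>
     (\<forall>x y. 0 \<le> x \<and> x < y \<and> y \<le> 1 \<and> (\<forall>s\<in>S. s \<le> x \<or> y \<le> s) \<longrightarrow> P x y)"

definition subinterval_closed :: "(real \<Rightarrow> real \<Rightarrow> bool) \<Rightarrow> bool" where
  "subinterval_closed P \<longleftrightarrow> (\<forall>x y x' y'. P x y \<and> x \<le> x' \<and> x' < y' \<and> y' \<le> y \<longrightarrow> P x' y')"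

lemma piecewiseD:
  "piecewise P S \<Longrightarrow> 0 \<le> x \<Longrightarrow> x < y \<Longrightarrow> y \<le> 1 \<Longrightarrow> (\<And>s. s \<in> S \<Longrightarrow> s \<le> x \<or> y \<le> s) \<Longrightarrow> P x y"
  unfolding piecewise_def by blast

lemma piecewiseI:
  assumes "finite S" "S \<subseteq> {0..1}" "0 \<in> S" "1 \<in> S"
    and "\<And>x y. 0 \<le> x \<Longrightarrow> x < y \<Longrightarrow> y \<le> 1 \<Longrightarrow> (\<And>s. s \<in> S \<Longrightarrow> s \<le> x \<or> y \<le> s) \<Longrightarrow> P x y"
  shows "piecewise P S"
  using assms unfolding piecewise_def by blast

lemma piecewise_breakpoints: "piecewise P S \<Longrightarrow> finite S \<and> S \<subseteq> {0..1} \<and> 0 \<in> S \<and> 1 \<in> S"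
  unfolding piecewise_def by blast

lemma piecewise_mono:
  assumes "piecewise P S" and "\<And>x y. 0 \<le> x \<Longrightarrow> x < y \<Longrightarrow> y \<le> 1 \<Longrightarrow> P x y \<Longrightarrow> Q x y"
  shows "piecewise Q S"
  using assms unfolding piecewise_def by blast

lemma piecewise_trivial: "(\<And>x y. P x y) \<Longrightarrow> piecewise P {0, 1}"
  unfolding piecewise_def by auto

lemma piecewise_of_partition:
  assumes P: "subinterval_closed P" and a0: "a 0 = 0" and ak: "a k = 1"
    and inc: "\<forall>i<k. a i < a (Suc i)" and pieces: "\<forall>i<k. P (a i) (a (Suc i))"
  shows "piecewise P (a ` {..k})"
proof -
  have mono: "a i \<le> a j" if "i \<le> j" "j \<le> k" for i j
    using that
  proof (induction j)
    case (Suc j)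
    show ?case
    proof (cases "i = Suc j")
      case False
      then have "a i \<le> a j" using Suc by simp
      also have "a j < a (Suc j)" using inc Suc.prems by simp
      finally show ?thesis by simp
    qed simp
  qed simp
  have range: "a i \<in> {0..1}" if "i \<le> k" for i
    using mono[of 0 i] mono[of i k] that a0 ak by auto
  show ?thesis
  proof (rule piecewiseI)
    show "finite (a ` {..k})" by simp
    show "a ` {..k} \<subseteq> {0..1}" using range by auto
    show "0 \<in> a ` {..k}" "1 \<in> a ` {..k}" using a0 ak by (metis atMost_iff image_eqI le0 order_refl)+
    fix x y assume xy: "0 \<le> x" "x < y" "y \<le> 1" and between: "\<And>s. s \<in> a ` {..k} \<Longrightarrow> s \<le> x \<or> y \<le> s"
    define I where "I = {i. i \<le> k \<and> a i \<le> x}"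
    have "finite I" "0 \<in> I" unfolding I_def using a0 xy by auto
    define i where "i = Max I"
    have iI: "i \<in> I" unfolding i_def using \<open>finite I\<close> \<open>0 \<in> I\<close> by (intro Max_in) auto
    have imax: "j \<le> i" if "j \<in> I" for j unfolding i_def using \<open>finite I\<close> that by simp
    have "i \<noteq> k" using iI ak xy unfolding I_def by auto
    then have ik: "i < k" using iI unfolding I_def by simp
    have "x < a (Suc i)" using imax[of "Suc i"] ik unfolding I_def by fastforce
    moreover have "a (Suc i) \<le> x \<or> y \<le> a (Suc i)" using between ik by simp
    ultimately have "y \<le> a (Suc i)" by linarith
    moreover have "a i \<le> x" using iI unfolding I_def by simp
    ultimately show "P x y" using P pieces ik xy unfolding subinterval_closed_def by blast
  qed
qed

lemma partition_of_piecewise: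
  assumes "piecewise P S"
  obtains a k where "a 0 = 0" "a k = 1" "\<forall>i<k. a i < a (Suc i)" "\<forall>i\<le>k. a i \<in> S"
    "\<forall>i<k. P (a i) (a (Suc i))"
proof -
  have fin: "finite S" and S01: "S \<subseteq> {0..1}" and S0: "0 \<in> S" and S1: "1 \<in> S"
    using assms unfolding piecewise_def by auto
  define L where "L = sorted_list_of_set S"
  have setL: "set L = S" and sL: "sorted_wrt (<) L" unfolding L_def using fin by simp_all
  define k where "k = length L - 1"
  have lt: "L ! i < L ! j \<longleftrightarrow> i < j" if "i < length L" "j < length L" for i j
    using sL that by (metis linorder_neqE_nat not_less_iff_gr_or_eq sorted_wrt_iff_nth_less)
  have inS: "L ! i \<in> S" if "i < length L" for i using setL that by auto
  have kl: "k < length L" unfolding k_def using S0 setL by (cases L) auto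
  obtain j0 where j0: "j0 < length L" "L ! j0 = 0" using S0 setL by (metis in_set_conv_nth)
  obtain j1 where j1: "j1 < length L" "L ! j1 = 1" using S1 setL by (metis in_set_conv_nth)
  have a0: "L ! 0 = 0"
    using lt[of j0 0] j0 inS[of 0] S01 kl by (cases "j0 = 0") force+
  have ak: "L ! k = 1"
    using lt[of k j1] j1 inS[of k] S01 kl unfolding k_def by (cases "j1 = k") force+
  show ?thesis
  proof (rule that[of "\<lambda>i. L ! i" k])
    show "\<forall>i<k. L ! i < L ! Suc i" "\<forall>i\<le>k. L ! i \<in> S" using lt inS kl by auto
    show "\<forall>i<k. P (L ! i) (L ! Suc i)"
    proof (intro allI impI)
      fix i assume ik: "i < k"
      show "P (L ! i) (L ! Suc i)"
      proof (rule piecewiseD[OF assms])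
        show "0 \<le> L ! i" "L ! i < L ! Suc i" "L ! Suc i \<le> 1"
          using inS[of i] inS[of "Suc i"] lt[of i "Suc i"] ik kl S01 by auto
        fix s assume "s \<in> S"
        then obtain j where j: "j < length L" "L ! j = s" using setL by (metis in_set_conv_nth)
        then show "s \<le> L ! i \<or> L ! Suc i \<le> s"
          using lt[of i j] lt[of j "Suc i"] ik kl by fastforce
      qed
    qed
  qed (fact a0 ak)+
qed

lemma piecewise_glue:
  assumes S: "piecewise P S"
    and piece: "\<And>x y. 0 \<le> x \<Longrightarrow> x < y \<Longrightarrow> y \<le> 1 \<Longrightarrow> P x y \<Longrightarrow> Q x y"
    and glue: "\<And>x s y. 0 \<le> x \<Longrightarrow> x < s \<Longrightarrow> s < y \<Longrightarrow> y \<le> 1 \<Longrightarrow> s \<in> S \<Longrightarrow>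
      Q x s \<Longrightarrow> Q s y \<Longrightarrow> Q x y"
    and xy: "0 \<le> x" "x < y" "y \<le> 1"
  shows "Q x y"
  using xy
proof (induction "card {s\<in>S. x < s \<and> s < y}" arbitrary: x y rule: less_induct)
  case less
  have fin: "finite S" using S unfolding piecewise_def by auto
  show ?case
  proof (cases "\<exists>s\<in>S. x < s \<and> s < y")
    case False
    then show ?thesis using less.prems by (intro piece piecewiseD[OF S]) force+
  next
    case True
    then obtain s where s: "s \<in> S" "x < s" "s < y" by blast
    have "card {t\<in>S. x < t \<and> t < s} < card {t\<in>S. x < t \<and> t < y}"
      "card {t\<in>S. s < t \<and> t < y} < card {t\<in>S. x < t \<and> t < y}"
      using fin s by (auto intro!: psubset_card_mono)
    then have "Q x s" "Q s y" using less.hyps less.prems s by auto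
    then show ?thesis using glue less.prems s by blast
  qed
qed

lemma enclosing_breakpoints:
  fixes S :: "'a::linorder set"
  assumes "finite S" "a \<in> S" "a \<le> u" "b \<in> S" "v \<le> b"
  obtains x y where "x \<in> S" "x \<le> u" "y \<in> S" "v \<le> y"
    "\<And>s. s \<in> S \<Longrightarrow> s \<le> u \<or> v \<le> s \<Longrightarrow> s \<le> x \<or> y \<le> s"
proof -
  have L: "finite {s \<in> S. s \<le> u}" "{s \<in> S. s \<le> u} \<noteq> {}"
    and R: "finite {s \<in> S. v \<le> s}" "{s \<in> S. v \<le> s} \<noteq> {}" using assms by auto
  show ?thesis
  proof (rule that[of "Max {s \<in> S. s \<le> u}" "Min {s \<in> S. v \<le> s}"])
    show "Max {s \<in> S. s \<le> u} \<in> S" "Max {s \<in> S. s \<le> u} \<le> u" using Max_in[OF L] by auto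
    show "Min {s \<in> S. v \<le> s} \<in> S" "v \<le> Min {s \<in> S. v \<le> s}" using Min_in[OF R] by auto
    show "s \<le> Max {s \<in> S. s \<le> u} \<or> Min {s \<in> S. v \<le> s} \<le> s"
      if "s \<in> S" "s \<le> u \<or> v \<le> s" for s
      using that Max_ge[OF L(1)] Min_le[OF R(1)] by blast
  qed
qed

lemma piecewise_refine:
  assumes P: "piecewise P S"
    and refine: "\<And>x y. 0 \<le> x \<Longrightarrow> x < y \<Longrightarrow> y \<le> 1 \<Longrightarrow> P x y \<Longrightarrow>
          \<exists>T. finite T \<and> (\<forall>u v. x \<le> u \<and> u < v \<and> v \<le> y \<and> (\<forall>t\<in>T. t \<le> u \<or> v \<le> t) \<longrightarrow> Q u v)"
  shows "\<exists>S'. piecewise Q S'"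
proof -
  have S: "finite S" "S \<subseteq> {0..1}" "0 \<in> S" "1 \<in> S" using piecewise_breakpoints[OF P] by auto
  define splits where "splits x y T \<longleftrightarrow>
    finite T \<and> (\<forall>u v. x \<le> u \<and> u < v \<and> v \<le> y \<and> (\<forall>t\<in>T. t \<le> u \<or> v \<le> t) \<longrightarrow> Q u v)" for x y T
  define pieces where "pieces = {(x, y) \<in> S \<times> S. x < y \<and> P x y}"
  define T where "T p = (SOME T. splits (fst p) (snd p) T)" for p
  define S' where "S' = S \<union> (\<Union>(x, y)\<in>pieces. T (x, y) \<inter> {x..y})"
  have splitsT: "splits x y (T (x, y))" if "(x, y) \<in> pieces" for x y
  proof -
    have "0 \<le> x" "x < y" "y \<le> 1" "P x y" using that S(2) unfolding pieces_def by auto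
    then show ?thesis unfolding T_def splits_def fst_conv snd_conv by (rule someI_ex[OF refine])
  qed
  have "pieces \<subseteq> S \<times> S" unfolding pieces_def by auto
  then have "finite pieces" using S(1) by (simp add: finite_subset)
  have "piecewise Q S'"
  proof (rule piecewiseI)
    show "finite S'" using \<open>finite pieces\<close> splitsT S(1) unfolding S'_def splits_def by auto
    show "S' \<subseteq> {0..1}" using S(2) unfolding S'_def pieces_def by fastforce
    show "0 \<in> S'" "1 \<in> S'" using S unfolding S'_def by auto
    fix u v assume uv: "0 \<le> u" "u < v" "v \<le> 1" and avoid: "\<And>s. s \<in> S' \<Longrightarrow> s \<le> u \<or> v \<le> s"
    obtain x y where x: "x \<in> S" "x \<le> u" and y: "y \<in> S" "v \<le> y"
      and enclose: "\<And>s. s \<in> S \<Longrightarrow> s \<le> u \<or> v \<le> s \<Longrightarrow> s \<le> x \<or> y \<le> s"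
      by (rule enclosing_breakpoints[OF S(1,3) uv(1) S(4) uv(3)]) blast
    have "s \<le> x \<or> y \<le> s" if "s \<in> S" for s
      using enclose[OF that avoid] that unfolding S'_def by blast
    then have "P x y" using x y S(2) uv by (intro piecewiseD[OF P]) auto
    then have xy: "(x, y) \<in> pieces" unfolding pieces_def using x y uv by auto
    have "t \<le> u \<or> v \<le> t" if "t \<in> T (x, y)" for t
    proof (cases "t \<in> {x..y}")
      case True
      then show ?thesis using avoid xy that unfolding S'_def by blast
    qed (use x y in auto)
    then show "Q u v" using splitsT[OF xy] x y uv unfolding splits_def by blast
  qed
  then show ?thesis ..
qed

section \<open>Thompson's group F\<close>

lemma dyadic_0: "dyadic 0" and dyadic_1: "dyadic 1"
  unfolding dyadic_def by (metis div_by_1 of_int_0 of_int_1 power_0)+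

lemma dyadic_frac: "dyadic (real_of_int p / 2 ^ k)"
  unfolding dyadic_def by blast

lemma dyadic_add:
  assumes "dyadic x" "dyadic y" shows "dyadic (x + y)"
proof -
  obtain p k q l where x: "x = real_of_int p / 2 ^ k" and y: "y = real_of_int q / 2 ^ l"
    using assms unfolding dyadic_def by blast
  have "x + y = real_of_int (p * 2 ^ l + q * 2 ^ k) / 2 ^ (k + l)"
    unfolding x y by (simp add: field_simps power_add)
  then show ?thesis unfolding dyadic_def by blast
qed

lemma dyadic_minus: "dyadic x \<Longrightarrow> dyadic (- x)"
  unfolding dyadic_def by (metis minus_divide_left of_int_minus)

lemma dyadic_diff: "dyadic x \<Longrightarrow> dyadic y \<Longrightarrow> dyadic (x - y)"
  using dyadic_add[of x "- y"] dyadic_minus by simp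

lemma dyadic_mult_pow2:
  assumes "dyadic x" shows "dyadic (2 powi e * x)"
proof -
  obtain p k where x: "x = real_of_int p / 2 ^ k" using assms unfolding dyadic_def by blast
  show ?thesis
  proof (cases "e \<ge> 0")
    case True
    then have "2 powi e * x = real_of_int (p * 2 ^ nat e) / 2 ^ k"
      unfolding x by (simp add: power_int_def)
    then show ?thesis unfolding dyadic_def by blast
  next
    case False
    then have "2 powi e * x = real_of_int p / 2 ^ (k + nat (- e))"
      unfolding x by (simp add: power_int_def power_add power_one_over)
    then show ?thesis unfolding dyadic_def by blast
  qed
qed

lemma dyadic_mult_pow2_iff: "dyadic (2 powi e * x) \<longleftrightarrow> dyadic x"
proof -
  have "2 powi (- e) * (2 powi e * x) = x" by (simp add: power_int_minus)
  then show ?thesis using dyadic_mult_pow2[of "2 powi e * x" "- e"] dyadic_mult_pow2[of x e] by metis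
qed

definition pow2_affine_on :: "(real \<Rightarrow> real) \<Rightarrow> real \<Rightarrow> real \<Rightarrow> bool" where
  "pow2_affine_on f x y \<longleftrightarrow> (\<exists>(e::int) b. \<forall>t\<in>{x..y}. f t = 2 powi e * t + b)"

lemma subinterval_closed_pow2_affine_on: "subinterval_closed (pow2_affine_on f)"
  unfolding subinterval_closed_def pow2_affine_on_def by (meson atLeastAtMost_iff order_trans less_imp_le)

lemma thompsonF_iff_piecewise:
  "f \<in> thompsonF \<longleftrightarrow> (\<forall>t. t \<notin> {0..1} \<longrightarrow> f t = t) \<and> f 0 = 0 \<and> f 1 = 1 \<and>
     (\<exists>S \<subseteq> Collect dyadic. piecewise (pow2_affine_on f) S)"
proof -
  have "(\<exists>S \<subseteq> Collect dyadic. piecewise (pow2_affine_on f) S) \<longleftrightarrow>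
    (\<exists>a k e b. a 0 = 0 \<and> a k = 1 \<and> (\<forall>i<k. a i < a (Suc i)) \<and> (\<forall>i\<le>k. dyadic (a i)) \<and>
       (\<forall>i<k. \<forall>t\<in>{a i..a (Suc i)}. f t = 2 powi e i * t + b i))" (is "?pw \<longleftrightarrow> ?seq")
  proof
    assume ?seq
    then obtain a k e b where a: "a 0 = 0" "a k = 1" "\<forall>i<k. a i < a (Suc i)" "\<forall>i\<le>k. dyadic (a i)"
      and pieces: "\<forall>i<k. \<forall>t\<in>{a i..a (Suc i)}. f t = 2 powi e i * t + b i"
      by blast
    have "\<forall>i<k. pow2_affine_on f (a i) (a (Suc i))"
      using pieces unfolding pow2_affine_on_def by blast
    then have "piecewise (pow2_affine_on f) (a ` {..k})"
      by (rule piecewise_of_partition[OF subinterval_closed_pow2_affine_on a(1-3)])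
    moreover have "a ` {..k} \<subseteq> Collect dyadic" using a(4) by auto
    ultimately show ?pw by blast
  next
    assume ?pw
    then obtain S where S: "S \<subseteq> Collect dyadic" "piecewise (pow2_affine_on f) S" by blast
    obtain a k where a: "a 0 = 0" "a k = 1" "\<forall>i<k. a i < a (Suc i)" "\<forall>i\<le>k. a i \<in> S"
      and pieces: "\<forall>i<k. pow2_affine_on f (a i) (a (Suc i))"
      using partition_of_piecewise[OF S(2)] by blast
    then have "\<forall>i. \<exists>e b. i < k \<longrightarrow> (\<forall>t\<in>{a i..a (Suc i)}. f t = 2 powi e * t + b)"
      unfolding pow2_affine_on_def by blast
    then obtain e b where "\<forall>i<k. \<forall>t\<in>{a i..a (Suc i)}. f t = 2 powi e i * t + b i"
      by metis
    then show ?seq using a S(1) by blast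
  qed
  then show ?thesis unfolding thompsonF_def mem_Collect_eq by simp
qed

lemma thompsonF_outside: "f \<in> thompsonF \<Longrightarrow> t \<notin> {0..1} \<Longrightarrow> f t = t"
  and thompsonF_0: "f \<in> thompsonF \<Longrightarrow> f 0 = 0"
  and thompsonF_1: "f \<in> thompsonF \<Longrightarrow> f 1 = 1"
  unfolding thompsonF_def by blast+

lemma thompsonF_piecewise:
  assumes "f \<in> thompsonF"
  obtains S where "S \<subseteq> Collect dyadic" "piecewise (pow2_affine_on f) S"
  using assms unfolding thompsonF_iff_piecewise by blast

lemma thompsonF_less_on_unit:
  assumes f: "f \<in> thompsonF" and xy: "0 \<le> x" "x < y" "y \<le> 1"
  shows "f x < f y"
proof -
  obtain S where S: "piecewise (pow2_affine_on f) S" using thompsonF_piecewise[OF f] .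
  show ?thesis
  proof (rule piecewise_glue[OF S _ _ xy])
    fix x y :: real assume "x < y" "pow2_affine_on f x y"
    then obtain e b where "\<forall>t\<in>{x..y}. f t = 2 powi e * t + b" unfolding pow2_affine_on_def by blast
    then show "f x < f y" using \<open>x < y\<close> by simp
  qed auto
qed

lemma thompsonF_maps_unit: "f \<in> thompsonF \<Longrightarrow> t \<in> {0..1} \<Longrightarrow> f t \<in> {0..1}"
  using thompsonF_less_on_unit[of f 0 t] thompsonF_less_on_unit[of f t 1]
  by (cases "t = 0"; cases "t = 1") (auto simp: thompsonF_0 thompsonF_1)

lemma thompsonF_strict_mono:
  assumes f: "f \<in> thompsonF" shows "strict_mono f"
proof
  fix x y :: real assume "x < y"
  then show "f x < f y"
    using thompsonF_less_on_unit[OF f, of x y] thompsonF_outside[OF f, of x]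
      thompsonF_outside[OF f, of y] thompsonF_maps_unit[OF f, of x] thompsonF_maps_unit[OF f, of y]
    by (cases "x \<in> {0..1}"; cases "y \<in> {0..1}") auto
qed

lemma thompsonF_le_iff: "f \<in> thompsonF \<Longrightarrow> f x \<le> f y \<longleftrightarrow> x \<le> y"
  using thompsonF_strict_mono strict_mono_less_eq by blast

lemma thompsonF_inj: "f \<in> thompsonF \<Longrightarrow> inj f"
  using thompsonF_strict_mono strict_mono_imp_inj_on by blast

lemma thompsonF_surj:
  assumes f: "f \<in> thompsonF" shows "surj f"
proof -
  obtain S where S: "piecewise (pow2_affine_on f) S" using thompsonF_piecewise[OF f] .
  let ?onto = "\<lambda>x y. \<forall>z. f x \<le> z \<and> z \<le> f y \<longrightarrow> (\<exists>t\<in>{x..y}. f t = z)"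
  have "?onto 0 1"
  proof (rule piecewise_glue[OF S])
    fix x y :: real assume "x < y" "pow2_affine_on f x y"
    then obtain e b where eb: "\<forall>t\<in>{x..y}. f t = 2 powi e * t + b" unfolding pow2_affine_on_def by blast
    show "?onto x y"
    proof (intro allI impI)
      fix z assume z: "f x \<le> z \<and> z \<le> f y"
      define t where "t = (z - b) / 2 powi e"
      have "f x = 2 powi e * x + b" "f y = 2 powi e * y + b" using eb \<open>x < y\<close> by auto
      then have "t \<in> {x..y}" using z unfolding t_def by (simp add: field_simps)
      moreover have "2 powi e * t + b = z" unfolding t_def by simp
      ultimately show "\<exists>t\<in>{x..y}. f t = z" using eb by auto
    qed
  next
    fix x s y :: real assume "x < s" "s < y" and left: "?onto x s" and right: "?onto s y"
    show "?onto x y"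
    proof (intro allI impI)
      fix z assume "f x \<le> z \<and> z \<le> f y"
      then show "\<exists>t\<in>{x..y}. f t = z"
        using left[rule_format, of z] right[rule_format, of z] \<open>x < s\<close> \<open>s < y\<close>
        by (cases "z \<le> f s") force+
    qed
  qed auto
  then have "\<exists>t. f t = z" for z
    using thompsonF_outside[OF f, of z] thompsonF_0[OF f] thompsonF_1[OF f]
    by (cases "z \<in> {0..1}") auto
  then show ?thesis by (metis surjI)
qed

lemma thompsonF_inv_f: "f \<in> thompsonF \<Longrightarrow> inv f (f t) = t"
  by (rule inv_f_f[OF thompsonF_inj])

lemma thompsonF_f_inv: "f \<in> thompsonF \<Longrightarrow> f (inv f t) = t"
  by (rule surj_f_inv_f[OF thompsonF_surj])

lemma thompsonF_inv_le_iff: "f \<in> thompsonF \<Longrightarrow> inv f x \<le> inv f y \<longleftrightarrow> x \<le> y"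
  using thompsonF_le_iff[of f "inv f x" "inv f y"] thompsonF_f_inv[of f] by simp

lemma thompsonF_inv_maps_unit:
  assumes f: "f \<in> thompsonF" and t: "t \<in> {0..1}" shows "inv f t \<in> {0..1}"
proof (rule ccontr)
  assume "inv f t \<notin> {0..1}"
  moreover from this have "inv f t = t"
    using thompsonF_outside[OF f] thompsonF_f_inv[OF f, of t] by metis
  ultimately show False using t by simp
qed

lemma thompsonF_inv_outside: "f \<in> thompsonF \<Longrightarrow> t \<notin> {0..1} \<Longrightarrow> inv f t = t"
  using thompsonF_inv_f[of f t] thompsonF_outside[of f t] by simp

lemma thompsonF_dyadic_iff:
  assumes f: "f \<in> thompsonF" and t: "t \<in> {0..1}"
  shows "dyadic (f t) \<longleftrightarrow> dyadic t"
proof -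
  obtain S where S: "S \<subseteq> Collect dyadic" "piecewise (pow2_affine_on f) S"
    using thompsonF_piecewise[OF f] .
  \<comment> \<open>On a piece \<open>f t = f x + 2\<^sup>e (t - x)\<close>; the breakpoints are dyadic, so this propagates from \<open>0\<close>.\<close>
  let ?Q = "\<lambda>x y. dyadic x \<longrightarrow> dyadic (f x) \<longrightarrow> (\<forall>t\<in>{x..y}. dyadic (f t) \<longleftrightarrow> dyadic t)"
  have "?Q 0 1"
  proof (rule piecewise_glue[OF S(2)])
    fix x y :: real assume "x < y" "pow2_affine_on f x y"
    then obtain e b where eb: "\<forall>t\<in>{x..y}. f t = 2 powi e * t + b" unfolding pow2_affine_on_def by blast
    have "f t = f x + 2 powi e * (t - x)" if "t \<in> {x..y}" for t
      using eb that \<open>x < y\<close> by (auto simp: algebra_simps)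
    then show "?Q x y"
      by (metis add_diff_cancel_left' diff_add_cancel dyadic_add dyadic_diff dyadic_mult_pow2_iff)
  next
    fix x s y :: real assume "x < s" "s < y" "s \<in> S" and left: "?Q x s" and right: "?Q s y"
    have "dyadic s" using \<open>s \<in> S\<close> S(1) by auto
    show "?Q x y"
    proof (intro impI ballI)
      fix t assume dx: "dyadic x" "dyadic (f x)" and t: "t \<in> {x..y}"
      have "dyadic (f s)" using left dx \<open>dyadic s\<close> \<open>x < s\<close> by auto
      then show "dyadic (f t) \<longleftrightarrow> dyadic t"
        using left right dx t \<open>dyadic s\<close> by (cases "t \<le> s") auto
    qed
  qed auto
  then show ?thesis using t dyadic_0 thompsonF_0[OF f] by auto
qed

lemma piecewise_inv:
  assumes f: "f \<in> thompsonF" and P: "piecewise P S"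
  shows "piecewise (\<lambda>x y. P (inv f x) (inv f y)) (f ` S)"
proof (rule piecewiseI)
  have S: "finite S" "S \<subseteq> {0..1}" "0 \<in> S" "1 \<in> S" using piecewise_breakpoints[OF P] by auto
  then show "finite (f ` S)" "f ` S \<subseteq> {0..1}" "0 \<in> f ` S" "1 \<in> f ` S"
    using thompsonF_maps_unit[OF f] thompsonF_0[OF f] thompsonF_1[OF f] by force+
  fix x y assume xy: "0 \<le> x" "x < y" "y \<le> 1" and "\<And>s. s \<in> f ` S \<Longrightarrow> s \<le> x \<or> y \<le> s"
  then have between: "f s \<le> x \<or> y \<le> f s" if "s \<in> S" for s using that by blast
  show "P (inv f x) (inv f y)"
  proof (rule piecewiseD[OF P])
    show "0 \<le> inv f x" "inv f x < inv f y" "inv f y \<le> 1"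
      using thompsonF_inv_maps_unit[OF f, of x] thompsonF_inv_maps_unit[OF f, of y]
        thompsonF_inv_le_iff[OF f, of y x] xy by auto
    fix s assume "s \<in> S"
    then show "s \<le> inv f x \<or> inv f y \<le> s"
      using between thompsonF_inv_le_iff[OF f, of "f s"] thompsonF_inv_le_iff[OF f, of _ "f s"]
        thompsonF_inv_f[OF f, of s] by metis
  qed
qed

lemma piecewise_comp:
  assumes f: "f \<in> thompsonF" and P: "piecewise P S" and Q: "piecewise Q T"
  shows "piecewise (\<lambda>x y. P x y \<and> Q (f x) (f y)) (S \<union> inv f ` T)"
proof (rule piecewiseI)
  have S: "finite S" "S \<subseteq> {0..1}" "0 \<in> S" "1 \<in> S" and T: "finite T" "T \<subseteq> {0..1}"
    using piecewise_breakpoints[OF P] piecewise_breakpoints[OF Q] by auto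
  then show "finite (S \<union> inv f ` T)" "S \<union> inv f ` T \<subseteq> {0..1}"
    "0 \<in> S \<union> inv f ` T" "1 \<in> S \<union> inv f ` T"
    using thompsonF_inv_maps_unit[OF f] by auto
  fix x y assume xy: "0 \<le> x" "x < y" "y \<le> 1"
    and between: "\<And>s. s \<in> S \<union> inv f ` T \<Longrightarrow> s \<le> x \<or> y \<le> s"
  have "P x y" using xy between by (intro piecewiseD[OF P]) auto
  moreover have "Q (f x) (f y)"
  proof (rule piecewiseD[OF Q])
    show "0 \<le> f x" "f x < f y" "f y \<le> 1"
      using thompsonF_maps_unit[OF f, of x] thompsonF_maps_unit[OF f, of y]
        thompsonF_le_iff[OF f, of y x] xy by auto
    fix t assume "t \<in> T"
    then have "inv f t \<le> x \<or> y \<le> inv f t" using between by blast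
    then show "t \<le> f x \<or> f y \<le> t"
      using thompsonF_le_iff[OF f, of "inv f t"] thompsonF_le_iff[OF f, of _ "inv f t"]
        thompsonF_f_inv[OF f, of t] by metis
  qed
  ultimately show "P x y \<and> Q (f x) (f y)" ..
qed

lemma thompsonF_inv_closed:
  assumes f: "f \<in> thompsonF" shows "inv f \<in> thompsonF"
proof -
  obtain S where S: "S \<subseteq> Collect dyadic" "piecewise (pow2_affine_on f) S"
    using thompsonF_piecewise[OF f] .
  have "f ` S \<subseteq> Collect dyadic"
    using S(1) piecewise_breakpoints[OF S(2)] thompsonF_dyadic_iff[OF f] by blast
  moreover have "piecewise (pow2_affine_on (inv f)) (f ` S)"
  proof (rule piecewise_mono[OF piecewise_inv[OF f S(2)]])
    fix x y assume "x < y" "pow2_affine_on f (inv f x) (inv f y)"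
    then obtain e b where eb: "\<forall>t\<in>{inv f x..inv f y}. f t = 2 powi e * t + b"
      unfolding pow2_affine_on_def by blast
    have "inv f t = 2 powi (- e) * t - 2 powi (- e) * b" if "t \<in> {x..y}" for t
    proof -
      have "t = 2 powi e * inv f t + b"
        using that eb thompsonF_inv_le_iff[OF f] thompsonF_f_inv[OF f] by (metis atLeastAtMost_iff)
      then show ?thesis by (simp add: power_int_minus field_simps)
    qed
    then show "pow2_affine_on (inv f) x y" unfolding pow2_affine_on_def
      by (metis diff_conv_add_uminus)
  qed
  ultimately show ?thesis unfolding thompsonF_iff_piecewise
    using thompsonF_inv_outside[OF f] thompsonF_inv_f[OF f, of 0] thompsonF_inv_f[OF f, of 1]
      thompsonF_0[OF f] thompsonF_1[OF f] by auto
qed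

lemma thompsonF_comp_closed:
  assumes f: "f \<in> thompsonF" and g: "g \<in> thompsonF" shows "g \<circ> f \<in> thompsonF"
proof -
  obtain S where S: "S \<subseteq> Collect dyadic" "piecewise (pow2_affine_on f) S"
    using thompsonF_piecewise[OF f] .
  obtain T where T: "T \<subseteq> Collect dyadic" "piecewise (pow2_affine_on g) T"
    using thompsonF_piecewise[OF g] .
  have "inv f ` T \<subseteq> Collect dyadic"
    using T(1) piecewise_breakpoints[OF T(2)] thompsonF_dyadic_iff[OF thompsonF_inv_closed[OF f]]
    by blast
  moreover have "piecewise (pow2_affine_on (g \<circ> f)) (S \<union> inv f ` T)"
  proof (rule piecewise_mono[OF piecewise_comp[OF f S(2) T(2)]])
    fix x y assume "x < y" "pow2_affine_on f x y \<and> pow2_affine_on g (f x) (f y)"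
    then obtain e b e' b' where eb: "\<forall>t\<in>{x..y}. f t = 2 powi e * t + b"
      and eb': "\<forall>t\<in>{f x..f y}. g t = 2 powi e' * t + b'" unfolding pow2_affine_on_def by blast
    have "(g \<circ> f) t = 2 powi (e' + e) * t + (2 powi e' * b + b')" if "t \<in> {x..y}" for t
    proof -
      have "f t \<in> {f x..f y}" using that thompsonF_le_iff[OF f] by auto
      then show ?thesis using eb eb' that by (simp add: power_int_add algebra_simps)
    qed
    then show "pow2_affine_on (g \<circ> f) x y" unfolding pow2_affine_on_def by blast
  qed
  ultimately show ?thesis unfolding thompsonF_iff_piecewise
    using S(1) thompsonF_outside[OF f] thompsonF_outside[OF g] thompsonF_0[OF f] thompsonF_0[OF g]
      thompsonF_1[OF f] thompsonF_1[OF g] by (auto intro!: exI[of _ "S \<union> inv f ` T"])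
qed

lemma id_in_thompsonF: "id \<in> thompsonF"
proof -
  have "piecewise (pow2_affine_on id) {0, 1}"
    by (rule piecewise_trivial) (auto simp: pow2_affine_on_def intro!: exI[of _ 0] exI[of _ 0])
  then show ?thesis unfolding thompsonF_iff_piecewise using dyadic_0 dyadic_1
    by (auto intro!: exI[of _ "{0, 1}"])
qed

lemma is_subgroupF_thompsonF: "is_subgroupF thompsonF"
  unfolding is_subgroupF_def using id_in_thompsonF thompsonF_comp_closed thompsonF_inv_closed by blast

lemma x0_in_thompsonF: "x0 \<in> thompsonF"
proof -
  define a :: "nat \<Rightarrow> real" where "a i = [0, 1/4, 1/2, 1] ! i" for i
  define e :: "nat \<Rightarrow> int" where "e i = [1, 0, -1] ! i" for i
  define b :: "nat \<Rightarrow> real" where "b i = [0, 1/4, 1/2] ! i" for i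
  have "\<forall>i\<le>3. dyadic (a i)"
    using dyadic_frac[of 0 0] dyadic_frac[of 1 2] dyadic_frac[of 1 1] dyadic_frac[of 1 0]
    by (auto simp: a_def le_Suc_eq numeral_eq_Suc)
  moreover have "\<forall>i<3. a i < a (Suc i) \<and> (\<forall>t\<in>{a i..a (Suc i)}. x0 t = 2 powi e i * t + b i)"
    by (auto simp: a_def e_def b_def x0_def less_Suc_eq numeral_eq_Suc)
  ultimately show ?thesis unfolding thompsonF_def
    by (intro CollectI conjI exI[of _ a] exI[of _ 3] exI[of _ e] exI[of _ b])
      (auto simp: a_def x0_def)
qed

lemma x1_in_thompsonF: "x1 \<in> thompsonF"
proof -
  define a :: "nat \<Rightarrow> real" where "a i = [0, 1/2, 5/8, 3/4, 1] ! i" for i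
  define e :: "nat \<Rightarrow> int" where "e i = [0, 1, 0, -1] ! i" for i
  define b :: "nat \<Rightarrow> real" where "b i = [0, -1/2, 1/8, 1/2] ! i" for i
  have "\<forall>i\<le>4. dyadic (a i)"
    using dyadic_frac[of 0 0] dyadic_frac[of 1 1] dyadic_frac[of 5 3] dyadic_frac[of 3 2]
      dyadic_frac[of 1 0]
    by (auto simp: a_def le_Suc_eq numeral_eq_Suc)
  moreover have "\<forall>i<4. a i < a (Suc i) \<and> (\<forall>t\<in>{a i..a (Suc i)}. x1 t = 2 powi e i * t + b i)"
    by (auto simp: a_def e_def b_def x1_def less_Suc_eq numeral_eq_Suc)
  ultimately show ?thesis unfolding thompsonF_def
    by (intro CollectI conjI exI[of _ a] exI[of _ 4] exI[of _ e] exI[of _ b])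
      (auto simp: a_def x1_def)
qed

lemma yF_in_thompsonF: "yF \<in> thompsonF"
  unfolding yF_def by (intro thompsonF_comp_closed x0_in_thompsonF x1_in_thompsonF)

section \<open>Generated subgroups and closures\<close>

lemma is_subgroupF_funpow: "is_subgroupF S \<Longrightarrow> f \<in> S \<Longrightarrow> f ^^ k \<in> S"
  by (induction k) (auto simp: is_subgroupF_def)

lemma is_subgroupF_Inter:
  assumes "\<S> \<noteq> {}" and "\<And>S. S \<in> \<S> \<Longrightarrow> is_subgroupF S"
  shows "is_subgroupF (\<Inter>\<S>)"
  using assms unfolding is_subgroupF_def by blast

lemma is_subgroupF_genF: "A \<subseteq> thompsonF \<Longrightarrow> is_subgroupF (genF A)"
  unfolding genF_def using is_subgroupF_thompsonF by (intro is_subgroupF_Inter) auto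

lemma genF_superset: "A \<subseteq> genF A"
  unfolding genF_def by blast

lemma is_subgroupF_Hmn: "is_subgroupF (Hmn m n)"
  unfolding Hmn_def xF_def using is_subgroupF_thompsonF x0_in_thompsonF yF_in_thompsonF
  by (intro is_subgroupF_genF) (auto intro: is_subgroupF_funpow)

lemma generators_in_Hmn: "xF ^^ m \<in> Hmn m n" "yF ^^ n \<in> Hmn m n"
  unfolding Hmn_def using genF_superset by blast+

definition agrees_on :: "(real \<Rightarrow> real) set \<Rightarrow> (real \<Rightarrow> real) \<Rightarrow> real \<Rightarrow> real \<Rightarrow> bool" where
  "agrees_on H f x y \<longleftrightarrow> (\<exists>h\<in>H. \<forall>t\<in>{x..y}. f t = h t)"

lemma subinterval_closed_agrees_on: "subinterval_closed (agrees_on H f)"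
  unfolding subinterval_closed_def agrees_on_def by (meson atLeastAtMost_iff order_trans less_imp_le)

lemma ClF_iff_piecewise: "f \<in> ClF H \<longleftrightarrow> f \<in> thompsonF \<and> (\<exists>S. piecewise (agrees_on H f) S)"
proof -
  have "(\<exists>S. piecewise (agrees_on H f) S) \<longleftrightarrow> (\<exists>a k. a 0 = 0 \<and> a k = 1 \<and>
      (\<forall>i<k. a i < a (Suc i)) \<and> (\<forall>i<k. agrees_on H f (a i) (a (Suc i))))"
    by (metis partition_of_piecewise piecewise_of_partition subinterval_closed_agrees_on)
  then show ?thesis unfolding ClF_def agrees_on_def mem_Collect_eq by simp
qed

lemma ClF_subset_thompsonF: "ClF H \<subseteq> thompsonF"
  unfolding ClF_def by blast

lemma subset_ClF:
  assumes "H \<subseteq> thompsonF" shows "H \<subseteq> ClF H"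
proof
  fix h assume "h \<in> H"
  then have "piecewise (agrees_on H h) {0, 1}"
    unfolding agrees_on_def by (intro piecewise_trivial) blast
  then show "h \<in> ClF H" unfolding ClF_iff_piecewise using \<open>h \<in> H\<close> assms by blast
qed

lemma ClF_comp_closed:
  assumes H: "is_subgroupF H" and f: "f \<in> ClF H" and g: "g \<in> ClF H"
  shows "g \<circ> f \<in> ClF H"
proof -
  have fF: "f \<in> thompsonF" and gF: "g \<in> thompsonF" using f g ClF_subset_thompsonF by blast+
  obtain S T where S: "piecewise (agrees_on H f) S" and T: "piecewise (agrees_on H g) T"
    using f g unfolding ClF_iff_piecewise by blast
  have "piecewise (agrees_on H (g \<circ> f)) (S \<union> inv f ` T)"
  proof (rule piecewise_mono[OF piecewise_comp[OF fF S T]])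
    fix x y assume "agrees_on H f x y \<and> agrees_on H g (f x) (f y)"
    then obtain h1 h2 where h: "h1 \<in> H" "h2 \<in> H" and h1: "\<forall>t\<in>{x..y}. f t = h1 t"
      and h2: "\<forall>t\<in>{f x..f y}. g t = h2 t" unfolding agrees_on_def by blast
    have "(g \<circ> f) t = (h2 \<circ> h1) t" if "t \<in> {x..y}" for t
    proof -
      have "f t \<in> {f x..f y}" using that thompsonF_le_iff[OF fF] by auto
      then show ?thesis using h1 h2 that by simp
    qed
    moreover have "h2 \<circ> h1 \<in> H" using H h unfolding is_subgroupF_def by blast
    ultimately show "agrees_on H (g \<circ> f) x y" unfolding agrees_on_def by blast
  qed
  then show ?thesis unfolding ClF_iff_piecewise using thompsonF_comp_closed[OF fF gF] by blast
qed

lemma ClF_inv_closed: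
  assumes H: "is_subgroupF H" and f: "f \<in> ClF H"
  shows "inv f \<in> ClF H"
proof -
  have fF: "f \<in> thompsonF" using f ClF_subset_thompsonF by blast
  obtain S where S: "piecewise (agrees_on H f) S" using f unfolding ClF_iff_piecewise by blast
  have "piecewise (agrees_on H (inv f)) (f ` S)"
  proof (rule piecewise_mono[OF piecewise_inv[OF fF S]])
    fix x y assume "agrees_on H f (inv f x) (inv f y)"
    then obtain h where h: "h \<in> H" and hf: "\<forall>t\<in>{inv f x..inv f y}. f t = h t"
      unfolding agrees_on_def by blast
    have hF: "h \<in> thompsonF" using h H unfolding is_subgroupF_def by blast
    have "inv f t = inv h t" if "t \<in> {x..y}" for t
    proof -
      have "inv f t \<in> {inv f x..inv f y}" using that thompsonF_inv_le_iff[OF fF] by auto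
      then have "h (inv f t) = t" using hf thompsonF_f_inv[OF fF, of t] by auto
      then show ?thesis using thompsonF_inv_f[OF hF, of "inv f t"] by simp
    qed
    moreover have "inv h \<in> H" using H h unfolding is_subgroupF_def by blast
    ultimately show "agrees_on H (inv f) x y" unfolding agrees_on_def by blast
  qed
  then show ?thesis unfolding ClF_iff_piecewise using thompsonF_inv_closed[OF fF] by blast
qed

lemma is_subgroupF_ClF:
  assumes H: "is_subgroupF H" shows "is_subgroupF (ClF H)"
proof -
  have "id \<in> ClF H" using H subset_ClF unfolding is_subgroupF_def by blast
  then show ?thesis unfolding is_subgroupF_def
    using ClF_subset_thompsonF ClF_comp_closed[OF H] ClF_inv_closed[OF H] by blast
qed

lemma closedF_ClF: "closedF (ClF H)"
proof -
  have "f \<in> ClF H" if f: "f \<in> ClF (ClF H)" for f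
  proof -
    obtain S where S: "piecewise (agrees_on (ClF H) f) S" using f unfolding ClF_iff_piecewise by blast
    have "\<exists>S'. piecewise (agrees_on H f) S'"
    proof (rule piecewise_refine[OF S])
      fix x y assume "0 \<le> x" "x < y" "y \<le> 1" "agrees_on (ClF H) f x y"
      then obtain g where g: "g \<in> ClF H" and fg: "\<forall>t\<in>{x..y}. f t = g t"
        unfolding agrees_on_def by blast
      obtain T where T: "piecewise (agrees_on H g) T" using g unfolding ClF_iff_piecewise by blast
      have "agrees_on H f u v"
        if "x \<le> u" "u < v" "v \<le> y" "\<forall>t\<in>T. t \<le> u \<or> v \<le> t" and "0 \<le> x" "y \<le> 1" for u v
        using piecewiseD[OF T, of u v] that fg unfolding agrees_on_def by force
      moreover have "finite T" using piecewise_breakpoints[OF T] by blast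
      ultimately show "\<exists>T. finite T \<and>
        (\<forall>u v. x \<le> u \<and> u < v \<and> v \<le> y \<and> (\<forall>t\<in>T. t \<le> u \<or> v \<le> t) \<longrightarrow> agrees_on H f u v)"
        using \<open>0 \<le> x\<close> \<open>y \<le> 1\<close> by blast
    qed
    then show ?thesis unfolding ClF_iff_piecewise using f ClF_subset_thompsonF by blast
  qed
  moreover have "ClF H \<subseteq> ClF (ClF H)"
    using subset_ClF ClF_subset_thompsonF by blast
  ultimately show ?thesis unfolding closedF_def by blast
qed

section \<open>Binary words and branches\<close>

lemma bval_summable: "summable (\<lambda>i. (if s i then 1 else 0) / (2::real) ^ Suc i)"
proof (rule summable_comparison_test)
  show "\<exists>N. \<forall>n\<ge>N. norm ((if s n then 1 else 0) / (2::real) ^ Suc n) \<le> (1/2) ^ Suc n"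
    by (auto simp: power_divide)
  show "summable (\<lambda>i. (1/2::real) ^ Suc i)"
    using summable_geometric[of "1/2::real"] summable_ignore_initial_segment[of _ 1] by simp
qed

lemma bval_Suc: "bval s = (if s 0 then 1/2 else 0) + bval (\<lambda>i. s (Suc i)) / 2"
proof -
  define g where "g i = (if s i then 1 else 0) / (2::real) ^ Suc i" for i
  have g: "summable g" unfolding g_def by (rule bval_summable)
  have "bval (\<lambda>i. s (Suc i)) = (\<Sum>i. 2 * g (Suc i))"
    unfolding bval_def g_def by simp
  also have "\<dots> = 2 * (suminf g - g 0)"
    using suminf_mult[of "\<lambda>i. g (Suc i)" 2] suminf_split_head[OF g] g summable_Suc_iff by metis
  finally have "bval (\<lambda>i. s (Suc i)) = 2 * (suminf g - g 0)" .
  moreover have "bval s = suminf g" unfolding bval_def g_def ..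
  ultimately show ?thesis by (cases "s 0") (simp_all add: g_def field_simps)
qed

lemma bval_nonneg: "0 \<le> bval s"
  unfolding bval_def by (rule suminf_nonneg[OF bval_summable]) auto

lemma bval_le_1: "bval s \<le> 1"
proof -
  have geom: "(\<lambda>i. (1/2::real) ^ Suc i) sums 1"
    using sums_mult[OF geometric_sums[of "1/2::real"], of "1/2"] by simp
  have "bval s \<le> (\<Sum>i. (1/2::real) ^ Suc i)"
    unfolding bval_def
    by (rule suminf_le[OF _ bval_summable sums_summable[OF geom]]) (simp add: power_divide)
  then show ?thesis using sums_unique[OF geom] by simp
qed

text \<open>\<open>cyl_map u\<close> maps \<open>[0, 1]\<close> affinely onto the dyadic interval of numbers whose binary
expansion begins with \<open>u\<close>.\<close>

fun cyl_map :: "bool list \<Rightarrow> real \<Rightarrow> real" where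
  "cyl_map [] t = t"
| "cyl_map (b # u) t = (if b then 1/2 else 0) + cyl_map u t / 2"

lemma bval_wconc: "bval (wconc u \<alpha>) = cyl_map u (bval \<alpha>)"
proof (induction u)
  case Nil
  then show ?case by (simp add: wconc_def)
next
  case (Cons b u)
  have "(\<lambda>i. wconc (b # u) \<alpha> (Suc i)) = wconc u \<alpha>" "wconc (b # u) \<alpha> 0 = b"
    by (auto simp: wconc_def)
  then show ?case using bval_Suc[of "wconc (b # u) \<alpha>"] Cons.IH by simp
qed

lemma has_branchI:
  assumes "\<And>t. 0 \<le> t \<Longrightarrow> t \<le> 1 \<Longrightarrow> h (cyl_map u t) = cyl_map v t"
  shows "has_branch h u v"
  unfolding has_branch_def bval_wconc using assms bval_nonneg bval_le_1 by blast

lemma wconc_append: "wconc (u @ w) \<alpha> = wconc u (wconc w \<alpha>)"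
  by (auto simp: wconc_def fun_eq_iff nth_append)

lemma has_branch_append: "has_branch h u v \<Longrightarrow> has_branch h (u @ w) (v @ w)"
  by (simp add: has_branch_def wconc_append)

lemma has_branch_comp: "has_branch f u v \<Longrightarrow> has_branch g v w \<Longrightarrow> has_branch (g \<circ> f) u w"
  by (simp add: has_branch_def)

lemma has_branch_inv: "inj f \<Longrightarrow> has_branch f u v \<Longrightarrow> has_branch (inv f) v u"
  by (simp add: has_branch_def) (metis inv_f_f)

lemma has_branch_id: "has_branch id u u"
  by (simp add: has_branch_def)

lemma x0_branches:
  "has_branch x0 [False, False] [False]"
  "has_branch x0 [False, True] [True, False]"
  "has_branch x0 [True] [True, True]"
  by (auto intro!: has_branchI simp: x0_def field_simps)

lemma x1_branches:
  "has_branch x1 [False] [False]"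
  "has_branch x1 [True, False, False] [True, False]"
  "has_branch x1 [True, False, True] [True, True, False]"
  "has_branch x1 [True, True] [True, True, True]"
  by (auto intro!: has_branchI simp: x1_def field_simps)

section \<open>The cones \<open>0\<^sup>k1\<close> and \<open>1\<^sup>k0\<close>\<close>

text \<open>The words \<open>0\<^sup>k1\<close> and \<open>1\<^sup>k0\<close> (\<open>k \<ge> 1\<close>) are indexed by one integer line, \<open>0\<^sup>k1\<close> sitting
at \<open>1 - k\<close> and \<open>1\<^sup>k0\<close> at \<open>k\<close>; on it \<open>x\<^sub>0\<close> acts as the translation by \<open>1\<close>.\<close>

definition cone :: "int \<Rightarrow> bool list" where
  "cone j = (if j \<le> 0 then zw (nat (1 - j)) @ [True] else ow (nat j) @ [False])"

lemma cone_nonpos: "1 \<le> k \<Longrightarrow> cone (1 - int k) = zw k @ [True]"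
  and cone_pos: "1 \<le> k \<Longrightarrow> cone (int k) = ow k @ [False]"
  unfolding cone_def by simp_all

lemma x0_cone: "has_branch x0 (cone j) (cone (j + 1))"
proof -
  consider "j \<le> -1" | "j = 0" | "j \<ge> 1" by linarith
  then show ?thesis
  proof cases
    case 1
    then have "nat (1 - j) = Suc (Suc (nat (- 1 - j)))" "nat (- j) = Suc (nat (- 1 - j))" by auto
    with 1 have "cone j = [False, False] @ zw (nat (- 1 - j)) @ [True]"
      "cone (j + 1) = [False] @ zw (nat (- 1 - j)) @ [True]"
      unfolding cone_def by simp_all
    then show ?thesis using has_branch_append[OF x0_branches(1)] by simp
  next
    case 2
    then show ?thesis using x0_branches(2) unfolding cone_def by simp
  next
    case 3
    then have "nat j = Suc (nat (j - 1))" "nat (j + 1) = Suc (Suc (nat (j - 1)))" by auto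
    with 3 have "cone j = [True] @ ow (nat (j - 1)) @ [False]"
      "cone (j + 1) = [True, True] @ ow (nat (j - 1)) @ [False]"
      unfolding cone_def by simp_all
    then show ?thesis using has_branch_append[OF x0_branches(3)] by simp
  qed
qed

lemma x0_funpow_cone: "has_branch (x0 ^^ k) (cone j) (cone (j + int k))"
proof (induction k)
  case 0
  then show ?case using has_branch_id by (simp add: id_def)
next
  case (Suc k)
  then show ?case using has_branch_comp[OF Suc x0_cone] by (simp add: comp_def ac_simps)
qed

lemma yF_branchI: "has_branch x0 u v \<Longrightarrow> has_branch x0 v w \<Longrightarrow> has_branch x1 w z \<Longrightarrow> has_branch yF u z"
  unfolding yF_def by (metis has_branch_comp)

lemma yF_cone_nonneg:
  assumes "j \<ge> 0" shows "has_branch yF (cone j) (cone (j + 3))"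
proof -
  have "nat (j + 2) = Suc (Suc (nat j))" "nat (j + 3) = Suc (Suc (Suc (nat j)))" using assms by auto
  with assms have "cone (j + 2) = [True, True] @ ow (nat j) @ [False]"
    "cone (j + 3) = [True, True, True] @ ow (nat j) @ [False]"
    unfolding cone_def by simp_all
  then have "has_branch x1 (cone (j + 1 + 1)) (cone (j + 3))"
    using has_branch_append[OF x1_branches(4)] by (simp add: add.assoc)
  then show ?thesis using yF_branchI x0_cone by blast
qed

lemma yF_cone_le_minus2:
  assumes "j \<le> -2" shows "has_branch yF (cone j) (cone (j + 2))"
proof -
  have "nat (1 - (j + 2)) = Suc (nat (- 2 - j))" using assms by auto
  with assms have "cone (j + 2) = [False] @ zw (nat (- 2 - j)) @ [True]"
    unfolding cone_def by simp
  then have "has_branch x1 (cone (j + 1 + 1)) (cone (j + 2))"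
    using has_branch_append[OF x1_branches(1)] by (simp add: add.assoc)
  then show ?thesis using yF_branchI x0_cone by blast
qed

lemma yF_cone_minus1:
  "has_branch yF (cone (-1) @ [False]) (cone 1)"
  "has_branch yF (cone (-1) @ [True]) (cone 2)"
proof -
  have "has_branch x1 (cone (-1 + 1 + 1) @ [False]) (cone 1)"
    "has_branch x1 (cone (-1 + 1 + 1) @ [True]) (cone 2)"
    using x1_branches(2,3) unfolding cone_def by (simp_all add: numeral_eq_Suc)
  then show "has_branch yF (cone (-1) @ [False]) (cone 1)"
    "has_branch yF (cone (-1) @ [True]) (cone 2)"
    using yF_branchI has_branch_append[OF x0_cone] by blast+
qed

lemma yF_funpow_cone_nonneg: "j \<ge> 0 \<Longrightarrow> has_branch (yF ^^ k) (cone j) (cone (j + 3 * int k))"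
proof (induction k arbitrary: j)
  case 0
  then show ?case using has_branch_id by (simp add: id_def)
next
  case (Suc k)
  have "has_branch (yF ^^ k \<circ> yF) (cone j) (cone (j + 3 + 3 * int k))"
    using has_branch_comp[OF yF_cone_nonneg Suc.IH[of "j + 3"]] Suc.prems by simp
  then show ?case by (simp only: funpow_Suc_right) (simp add: comp_def algebra_simps)
qed

lemma yF_funpow_cone_nonpos: "j + 2 * int k \<le> 0 \<Longrightarrow> has_branch (yF ^^ k) (cone j) (cone (j + 2 * int k))"
proof (induction k arbitrary: j)
  case 0
  then show ?case using has_branch_id by (simp add: id_def)
next
  case (Suc k)
  have "has_branch (yF ^^ k \<circ> yF) (cone j) (cone (j + 2 + 2 * int k))"
    using has_branch_comp[OF yF_cone_le_minus2 Suc.IH[of "j + 2"]] Suc.prems by simp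
  then show ?case by (simp only: funpow_Suc_right) (simp add: comp_def algebra_simps)
qed

text \<open>For \<open>1 \<le> k \<le> n\<close> the word \<open>0\<^sup>2\<^sup>k\<close> (resp. \<open>0\<^sup>2\<^sup>k\<^sup>-\<^sup>1\<close>) needs \<open>k - 1\<close> applications of \<open>y\<close> to
reach the middle cone \<open>-1\<close> (resp. \<open>0\<close>), one to cross it, and the remaining \<open>n - k\<close> move
along the positive cones.\<close>

lemma yF_funpow_through:
  assumes "1 \<le> k" "k \<le> n" and "has_branch (yF ^^ (k - 1)) u v" "has_branch yF v w"
    "has_branch (yF ^^ (n - k)) w z"
  shows "has_branch (yF ^^ n) u z"
proof -
  obtain i where k: "k = Suc i" using assms(1) by (cases k) auto
  have "yF ^^ n = yF ^^ (n - k) \<circ> yF \<circ> yF ^^ (k - 1)"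
    using assms(2) funpow_add[of "n - k" k yF] unfolding k by (simp add: comp_assoc)
  then show ?thesis using assms(3-5) has_branch_comp by metis
qed

lemma yF_funpow_even_10:
  assumes "1 \<le> k" "k \<le> n"
  shows "has_branch (yF ^^ n) (zw (2 * k) @ [True, False]) (ow (1 + 3 * (n - k)) @ [False])"
proof (rule yF_funpow_through[OF assms])
  show "has_branch (yF ^^ (k - 1)) (zw (2 * k) @ [True, False]) (cone (-1) @ [False])"
    using has_branch_append[OF yF_funpow_cone_nonpos[of "1 - 2 * int k" "k - 1"]] assms
      cone_nonpos[of "2 * k"] by (simp add: of_nat_diff)
  show "has_branch (yF ^^ (n - k)) (cone 1) (ow (1 + 3 * (n - k)) @ [False])"
    using yF_funpow_cone_nonneg[of 1 "n - k"] cone_pos[of "1 + 3 * (n - k)"] by simp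
qed (rule yF_cone_minus1(1))

lemma yF_funpow_even_11:
  assumes "1 \<le> k" "k \<le> n"
  shows "has_branch (yF ^^ n) (zw (2 * k) @ [True, True]) (ow (2 + 3 * (n - k)) @ [False])"
proof (rule yF_funpow_through[OF assms])
  show "has_branch (yF ^^ (k - 1)) (zw (2 * k) @ [True, True]) (cone (-1) @ [True])"
    using has_branch_append[OF yF_funpow_cone_nonpos[of "1 - 2 * int k" "k - 1"]] assms
      cone_nonpos[of "2 * k"] by (simp add: of_nat_diff)
  show "has_branch (yF ^^ (n - k)) (cone 2) (ow (2 + 3 * (n - k)) @ [False])"
    using yF_funpow_cone_nonneg[of 2 "n - k"] cone_pos[of "2 + 3 * (n - k)"] by simp
qed (rule yF_cone_minus1(2))

lemma yF_funpow_odd: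
  assumes "1 \<le> k" "k \<le> n"
  shows "has_branch (yF ^^ n) (zw (2 * k - 1) @ [True]) (ow (3 * (n - k + 1)) @ [False])"
proof (rule yF_funpow_through[OF assms])
  show "has_branch (yF ^^ (k - 1)) (zw (2 * k - 1) @ [True]) (cone 0)"
    using yF_funpow_cone_nonpos[of "2 - 2 * int k" "k - 1"] assms cone_nonpos[of "2 * k - 1"]
    by (simp add: of_nat_diff)
  show "has_branch (yF ^^ (n - k)) (cone 3) (ow (3 * (n - k + 1)) @ [False])"
    using yF_funpow_cone_nonneg[of 3 "n - k"] cone_pos[of "3 * (n - k + 1)"] by (simp add: distrib_left ac_simps)
qed (use yF_cone_nonneg[of 0] in simp)

lemma simH_refl: "is_subgroupF H \<Longrightarrow> simH H u u"
  unfolding simH_def is_subgroupF_def using has_branch_id by blast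

lemma simH_sym: "is_subgroupF H \<Longrightarrow> simH H u v \<Longrightarrow> simH H v u"
  unfolding simH_def is_subgroupF_def using has_branch_inv thompsonF_inj by blast

lemma simH_trans: "is_subgroupF H \<Longrightarrow> simH H u v \<Longrightarrow> simH H v w \<Longrightarrow> simH H u w"
  unfolding simH_def is_subgroupF_def using has_branch_comp by blast

lemma simH_cone_shift_multiple:
  assumes H: "is_subgroupF H" and shift: "\<And>j. simH H (cone j) (cone (j + a))"
  shows "simH H (cone j) (cone (j + a * t))"
proof -
  have nat_multiple: "simH H (cone j) (cone (j + a * int k))" for j k
  proof (induction k arbitrary: j)
    case 0
    then show ?case using simH_refl[OF H] by simp
  next
    case (Suc k)
    then show ?case using simH_trans[OF H shift Suc.IH[of "j + a"]] by (simp add: algebra_simps)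
  qed
  show ?thesis
  proof (cases "t \<ge> 0")
    case True
    then show ?thesis using nat_multiple[of j "nat t"] by simp
  next
    case False
    then show ?thesis using nat_multiple[of "j + a * t" "nat (- t)"] simH_sym[OF H] by simp
  qed
qed

lemma simH_cone_shift_m:
  assumes H: "is_subgroupF H" and xm: "xF ^^ m \<in> H"
  shows "simH H (cone j) (cone (j + int m * t))"
  using simH_cone_shift_multiple[OF H] xm x0_funpow_cone unfolding simH_def xF_def by blast

text \<open>\<open>y\<^sup>n\<close> translates the cones by \<open>3n\<close> on the nonnegative side and by \<open>2n\<close> far enough on the
negative side; multiples of \<open>m\<close> carry any cone to either side, and the difference of the two
translations is \<open>n\<close>.\<close>

lemma simH_cone_shift_n:
  assumes H: "is_subgroupF H" and xm: "xF ^^ m \<in> H" and yn: "yF ^^ n \<in> H" and m: "1 \<le> m"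
  shows "simH H (cone j) (cone (j + int n))"
proof -
  define A where "A = \<bar>j\<bar>"
  define J where "J = j + int m * A"
  define B where "B = J + 3 * int n"
  define K where "K = B - int m * B"
  have "J \<ge> 0" "K \<le> 0"
    using m mult_right_mono[of 1 "int m" A] mult_right_mono[of 1 "int m" B]
    unfolding J_def K_def B_def A_def by auto
  have "simH H (cone j) (cone J)"
    unfolding J_def by (rule simH_cone_shift_m[OF H xm])
  moreover have "simH H (cone J) (cone B)"
    using yF_funpow_cone_nonneg[OF \<open>J \<ge> 0\<close>] yn unfolding simH_def B_def by blast
  moreover have "simH H (cone B) (cone K)"
    using simH_cone_shift_m[OF H xm, of B "- B"] unfolding K_def by simp
  moreover have "simH H (cone K) (cone (K - 2 * int n))"
    using yF_funpow_cone_nonpos[of "K - 2 * int n" n] \<open>K \<le> 0\<close> yn simH_sym[OF H]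
    unfolding simH_def by force
  moreover have "simH H (cone (K - 2 * int n)) (cone (j + int n))"
    using simH_cone_shift_m[OF H xm, of "K - 2 * int n" "B - A"]
    unfolding K_def B_def J_def by (simp add: algebra_simps)
  ultimately show ?thesis using simH_trans[OF H] by meson
qed

lemma simH_cone_shift_gcd:
  assumes H: "is_subgroupF H" and xm: "xF ^^ m \<in> H" and yn: "yF ^^ n \<in> H" and m: "1 \<le> m"
  shows "simH H (cone j) (cone (j + int (gcd m n)))"
proof -
  obtain u v where uv: "u * int m + v * int n = gcd (int m) (int n)" using bezout_int by blast
  have "simH H (cone j) (cone (j + int m * u))"
    by (rule simH_cone_shift_m[OF H xm])
  moreover have "simH H (cone (j + int m * u)) (cone (j + int m * u + int n * v))"
    using simH_cone_shift_multiple[OF H simH_cone_shift_n[OF H xm yn m]] .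
  ultimately show ?thesis using simH_trans[OF H] uv by (simp add: algebra_simps)
qed

lemma Kconds_of_generators:
  assumes H: "is_subgroupF H" and xm: "xF ^^ m \<in> H" and yn: "yF ^^ n \<in> H" and m: "1 \<le> m"
  shows "Kconds m n H"
proof -
  define d where "d = gcd m n"
  have shift: "simH H (cone j) (cone (j + int d))" for j
    unfolding d_def by (rule simH_cone_shift_gcd[OF H xm yn m])
  have "simH H (zw k @ [True]) (zw (k + d) @ [True])" if "k \<ge> 1" for k
    using shift[of "1 - int (k + d)"] simH_sym[OF H] cone_nonpos[of k] cone_nonpos[of "k + d"] that
    by (simp add: algebra_simps)
  moreover have "simH H (ow k @ [False]) (ow (k + d) @ [False])" if "k \<ge> 1" for k
    using shift[of "int k"] cone_pos[of k] cone_pos[of "k + d"] that by simp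
  moreover have "simH H (zw k @ [True]) (ow (d + 1 - k) @ [False])" if "1 \<le> k" "k \<le> d" for k
    using shift[of "1 - int k"] cone_nonpos[of k] cone_pos[of "d + 1 - k"] that
    by (simp add: of_nat_diff algebra_simps)
  moreover have "\<forall>k. 1 \<le> k \<and> k \<le> n \<longrightarrow>
      simH H (zw (2 * k) @ [True, False]) (ow (1 + 3 * (n - k)) @ [False]) \<and>
      simH H (zw (2 * k) @ [True, True]) (ow (2 + 3 * (n - k)) @ [False]) \<and>
      simH H (zw (2 * k - 1) @ [True]) (ow (3 * (n - k + 1)) @ [False])"
    using yn yF_funpow_even_10 yF_funpow_even_11 yF_funpow_odd unfolding simH_def by blast
  ultimately show ?thesis unfolding Kconds_def Let_def d_def[symmetric] by blast
qed

theorem lemma3p3: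
  fixes m n :: nat
  assumes "1 \<le> m" and "1 \<le> n"
  shows "Kmn m n \<subseteq> ClF (Hmn m n)"
proof -
  let ?H = "Hmn m n"
  have H: "is_subgroupF ?H" by (rule is_subgroupF_Hmn)
  then have "?H \<subseteq> ClF ?H" using subset_ClF unfolding is_subgroupF_def by blast
  then have "xF ^^ m \<in> ClF ?H" "yF ^^ n \<in> ClF ?H" using generators_in_Hmn by blast+
  then have "Kconds m n (ClF ?H)"
    using Kconds_of_generators[OF is_subgroupF_ClF[OF H]] assms(1) by blast
  then show ?thesis
    using is_subgroupF_ClF[OF H] closedF_ClF unfolding Kmn_def by blast
qed

end
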